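(* Let $O_{(4,1)}(x,y,z,w)=x^4z^2w^2+y^4x^2w^2+z^4x^2y^2+w^4y^2z^2-4x^2y^2z^2w^2$, let $0\le a\le1$ and $\alpha,\beta\in\mathbb R$. If $F_1=a\,O_{(4,1)}+x^2yz^2w(\alpha y^2+\beta w^2)$ is positive semidefinite on $\mathbb R^4$, then $\alpha=\beta=0$. *)

theory Defs
  imports Complex_Main
begin

definition O41 :: "real \<Rightarrow> real \<Rightarrow> real \<Rightarrow> real \<Rightarrow> real" where
  "O41 x y z w = x^4*z^2*w^2 + y^4*x^2*w^2 + z^4*x^2*y^2 + w^4*y^2*z^2 - 4*x^2*y^2*z^2*w^2"

end

theory Submission
  imports Defs
begin

text \<open>On the line \<open>(1, 1, 1, w)\<close> the form becomes the quartic
  \<open>a (1 - w\<^sup>2)\<^sup>2 + w (\<alpha> + \<beta> w\<^sup>2)\<close>. Its values at \<open>w = \<plusminus>1\<close> force \<open>\<alpha> = -\<beta>\<close>, after which it factors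
  as \<open>(w\<^sup>2 - 1) (a (w\<^sup>2 - 1) + \<beta> w)\<close>. Just outside \<open>[-1, 1]\<close> the first factor is small and positive
  while \<open>\<beta> w\<close> has either sign, so nonnegativity at \<open>w = \<plusminus>(1 + t)\<close> gives
  \<open>\<bar>\<beta>\<bar> \<le> a t (2 + t)\<close> for all \<open>t > 0\<close>, and \<open>t \<rightarrow> 0\<close> yields \<open>\<beta> = 0\<close>.\<close>

lemma O41_ones: "O41 1 1 1 w = (1 - w\<^sup>2)\<^sup>2"
  unfolding O41_def by (simp add: power2_eq_square power4_eq_xxxx algebra_simps)

lemma abs_le_of_quartic_nonneg:
  fixes a \<alpha> \<beta> t :: real
  assumes nonneg: "\<And>w. 0 \<le> a * (1 - w\<^sup>2)\<^sup>2 + w * (\<alpha> + \<beta> * w\<^sup>2)"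
    and "t > 0"
  shows "\<bar>\<beta>\<bar> \<le> a * t * (2 + t)"
proof -
  have "\<alpha> + \<beta> \<ge> 0" and "-(\<alpha> + \<beta>) \<ge> 0"
    using nonneg[of 1] nonneg[of "-1"] by simp_all
  then have \<alpha>: "\<alpha> = -\<beta>" by linarith
  have factor: "a * (1 - w\<^sup>2)\<^sup>2 + w * (\<alpha> + \<beta> * w\<^sup>2) = (w\<^sup>2 - 1) * (a * (w\<^sup>2 - 1) + \<beta> * w)"
    for w :: real
    unfolding \<alpha> by (simp add: power2_eq_square algebra_simps)
  have shift: "(s * (1 + t))\<^sup>2 - 1 = t * (2 + t)" if "s\<^sup>2 = 1" for s :: real
    using that by (simp add: power_mult_distrib power2_eq_square) algebra
  have "0 \<le> a * (t * (2 + t)) + s * \<beta> * (1 + t)" if "s\<^sup>2 = 1" for s :: real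
  proof -
    have "0 \<le> t * (2 + t) * (a * (t * (2 + t)) + s * \<beta> * (1 + t))"
      using nonneg[of "s * (1 + t)"] unfolding factor shift[OF that] by (simp add: algebra_simps)
    moreover have "t * (2 + t) > 0"
      using \<open>t > 0\<close> by simp
    ultimately show ?thesis
      by (simp add: zero_le_mult_iff)
  qed
  from this[of 1] this[of "-1"] have "\<bar>\<beta>\<bar> * (1 + t) \<le> a * t * (2 + t)"
    by (simp add: abs_if algebra_simps)
  moreover have "\<bar>\<beta>\<bar> \<le> \<bar>\<beta>\<bar> * (1 + t)"
    using \<open>t > 0\<close> by (simp add: algebra_simps)
  ultimately show ?thesis by linarith
qed

lemma quartic_nonneg_imp_odd_coeffs_zero:
  fixes a \<alpha> \<beta> :: real
  assumes nonneg: "\<And>w. 0 \<le> a * (1 - w\<^sup>2)\<^sup>2 + w * (\<alpha> + \<beta> * w\<^sup>2)"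
  shows "\<alpha> = 0 \<and> \<beta> = 0"
proof -
  have "((\<lambda>t. a * t * (2 + t)) \<longlongrightarrow> a * 0 * (2 + 0)) (at_right 0)"
    by (intro tendsto_intros)
  moreover have "\<forall>\<^sub>F t in at_right 0. \<bar>\<beta>\<bar> \<le> a * t * (2 + t)"
    using eventually_at_right_less by (rule eventually_mono) (rule abs_le_of_quartic_nonneg[OF nonneg])
  ultimately have "\<bar>\<beta>\<bar> \<le> 0"
    by (intro tendsto_le[of "at_right 0"]) auto
  moreover have "\<alpha> + \<beta> = 0"
    using nonneg[of 1] nonneg[of "-1"] by simp
  ultimately show ?thesis by simp
qed

theorem lemma3:
  fixes a \<alpha> \<beta> :: real
  assumes "0 \<le> a" and "a \<le> 1"
    and psd: "\<forall>x y z w :: real.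
      a * O41 x y z w + x^2*y*z^2*w*(\<alpha>*y^2 + \<beta>*w^2) \<ge> 0"
  shows "\<alpha> = 0 \<and> \<beta> = 0"
proof (rule quartic_nonneg_imp_odd_coeffs_zero)
  fix w :: real
  show "0 \<le> a * (1 - w\<^sup>2)\<^sup>2 + w * (\<alpha> + \<beta> * w\<^sup>2)"
    using psd[rule_format, of 1 1 1 w] by (simp add: O41_ones)
qed

end
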